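(* Let $n\ge2$, $\mathbf{a}\in\mathbb{C}^n$, $\beta>0$ and $f(\mathbf{z})=\frac12|\mathbf{a}^*\mathbf{z}|^2+\frac{\beta}{2}\|\mathbf{z}\|_4^4$ on $\mathbb{CS}^{n-1}$. There exists a local minimizer $\mathbf{z}$ of $f$ on $\mathbb{CS}^{n-1}$ with $\mathbf{a}^*\mathbf{z}=0$ if and only if either $\|\mathbf{a}\|_\infty\le\frac12\|\mathbf{a}\|_1$, or $\mathbf{a}$ has exactly one nonzero component and $\|\mathbf{a}\|_2^2\ge 2\beta/(n-1)$. Further, if $\mathbf{a}$ satisfies one of these conditions, then the local minimizers $\mathbf{z}$ with $\mathbf{a}^*\mathbf{z}=0$ are exactly the global minimizers of $f$ on $\mathbb{CS}^{n-1}$.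
   Context: $\mathbb{CS}^{n-1}=\{\mathbf{z}\in\mathbb{C}^n:\|\mathbf{z}\|_2=1\}$; $\|\mathbf{z}\|_4^4=\sum_k|z_k|^4$. *)

theory Defs
  imports "HOL-Analysis.Analysis"
begin

text \<open>Vectors in C^n are modelled as complex ^ 'n; the library norm is the Euclidean 2-norm.\<close>

definition inner_c :: "complex ^ 'n \<Rightarrow> complex ^ 'n \<Rightarrow> complex" where
  "inner_c a z = (\<Sum>k\<in>UNIV. cnj (a $ k) * z $ k)"

definition norm1 :: "complex ^ 'n \<Rightarrow> real" where
  "norm1 a = (\<Sum>k\<in>UNIV. cmod (a $ k))"

definition norminf :: "complex ^ 'n \<Rightarrow> real" where
  "norminf a = Max ((\<lambda>k. cmod (a $ k)) ` UNIV)"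

definition norm4_4 :: "complex ^ 'n \<Rightarrow> real" where
  "norm4_4 z = (\<Sum>k\<in>UNIV. cmod (z $ k) ^ 4)"

definition fobj :: "complex ^ 'n \<Rightarrow> real \<Rightarrow> complex ^ 'n \<Rightarrow> real" where
  "fobj a \<beta> z = (1/2) * cmod (inner_c a z) ^ 2 + (\<beta>/2) * norm4_4 z"

definition csphere :: "(complex ^ 'n) set" where
  "csphere = {z. norm z = 1}"

definition local_min_on :: "(complex ^ 'n \<Rightarrow> real) \<Rightarrow> (complex ^ 'n) set \<Rightarrow> complex ^ 'n \<Rightarrow> bool" where
  "local_min_on f S z \<longleftrightarrow> z \<in> S \<and> (\<exists>e>0. \<forall>w\<in>S. dist w z < e \<longrightarrow> f z \<le> f w)"

definition global_min_on :: "(complex ^ 'n \<Rightarrow> real) \<Rightarrow> (complex ^ 'n) set \<Rightarrow> complex ^ 'n \<Rightarrow> bool" where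
  "global_min_on f S z \<longleftrightarrow> z \<in> S \<and> (\<forall>w\<in>S. f z \<le> f w)"

end

theory Submission
  imports Defs
begin

(* At a local minimizer z with a*z = 0 the objective is (beta/2) ||z||_4^4. Moving along the
   great circle t |-> (z + t v) / ||z + t v|| with Re <z, v> = 0 changes f by an explicit quartic
   in t, so its first-order coefficient, and its second-order one when the first vanishes, must
   be nonnegative. Directions supported on one or two coordinates then force all nonzero |z_k|
   to be equal, allow at most one vanishing coordinate j, and in that case force a to be
   supported on j with |a_j|^2 >= 2 beta / (n - 1). If no coordinate vanishes, a*z = 0 with all
   |z_k| equal says that the numbers |a_k| close up into a polygon, i.e. ||a||_inf <= ||a||_1 / 2.
   In both cases f(z) attains a lower bound for f on the sphere (||w||_4^4 >= 1/n, resp.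
   Cauchy-Schwarz on the other n - 1 coordinates), and that bound is attained only where
   a*w = 0. *)

lemma power2_norm_add_scaleR:
  fixes x y :: "'a::real_inner"
  shows "(norm (x + t *\<^sub>R y))\<^sup>2 = (norm x)\<^sup>2 + 2 * t * inner x y + t\<^sup>2 * (norm y)\<^sup>2"
  by (simp only: power2_norm_eq_inner)
     (simp add: inner_add_left inner_add_right inner_commute power2_eq_square algebra_simps)

lemma sgn_add_scaleR_orthogonal:
  fixes z v :: "'a::real_inner"
  assumes "norm z = 1" "inner z v = 0"
  shows "sgn (z + t *\<^sub>R v) = (1 / sqrt (1 + t\<^sup>2 * (norm v)\<^sup>2)) *\<^sub>R (z + t *\<^sub>R v)"
  using assms power2_norm_add_scaleR[of z t v]
  by (simp add: sgn_div_norm norm_eq_sqrt_inner power2_norm_eq_inner divide_inverse)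

lemma power2_norm_vec: "(norm (z::'a::real_normed_vector^'n))\<^sup>2 = (\<Sum>l\<in>UNIV. (norm (z$l))\<^sup>2)"
  unfolding norm_vec_def L2_set_def by (simp add: sum_nonneg)

lemma sum_UNIV_single_support:
  assumes "\<And>l. l \<noteq> i \<Longrightarrow> g l = 0"
  shows "(\<Sum>l\<in>(UNIV::'n::finite set). g l) = g i"
  using assms by (subst sum.remove[of UNIV i]) auto

lemma sum_UNIV_two_support:
  assumes "i \<noteq> j" "\<And>l. l \<noteq> i \<Longrightarrow> l \<noteq> j \<Longrightarrow> g l = 0"
  shows "(\<Sum>l\<in>(UNIV::'n::finite set). g l) = g i + g j"
proof -
  have "(\<Sum>l\<in>UNIV. g l) = (\<Sum>l\<in>{i, j}. g l)"
    by (rule sum.mono_neutral_right) (auto simp: assms)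
  then show ?thesis
    using assms(1) by simp
qed

lemma card_nonzero_eq_1_iff:
  fixes a :: "'a::real_normed_vector^'n"
  shows "card {k. a$k \<noteq> 0} = 1 \<and> b \<le> (norm a)\<^sup>2
     \<longleftrightarrow> (\<exists>j. a$j \<noteq> 0 \<and> (\<forall>k. k \<noteq> j \<longrightarrow> a$k = 0) \<and> b \<le> (norm (a$j))\<^sup>2)"
proof -
  have norm_single: "(norm a)\<^sup>2 = (norm (a$j))\<^sup>2" if "\<forall>k. k \<noteq> j \<longrightarrow> a$k = 0" for j
    unfolding power2_norm_vec using that by (subst sum_UNIV_single_support[of j]) auto
  have "card {k. a$k \<noteq> 0} = 1 \<longleftrightarrow> (\<exists>j. {k. a$k \<noteq> 0} = {j})"
    by (simp add: card_1_singleton_iff)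
  also have "\<dots> \<longleftrightarrow> (\<exists>j. a$j \<noteq> 0 \<and> (\<forall>k. k \<noteq> j \<longrightarrow> a$k = 0))"
    by (auto simp: set_eq_iff)
  finally show ?thesis
    using norm_single by auto
qed

lemma eventually_at_right_0_quartic_neg:
  fixes c1 c2 c3 c4 :: real
  assumes "c1 < 0 \<or> c1 = 0 \<and> c2 < 0"
  shows "eventually (\<lambda>t. c1 * t + c2 * t\<^sup>2 + c3 * t ^ 3 + c4 * t ^ 4 < 0) (at_right 0)"
  using assms
proof
  assume "c1 < 0"
  have factor: "c1 * t + c2 * t\<^sup>2 + c3 * t ^ 3 + c4 * t ^ 4
      = t * (c1 + c2 * t + c3 * t\<^sup>2 + c4 * t ^ 3)" for t
    by (simp add: power2_eq_square power3_eq_cube power4_eq_xxxx algebra_simps)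
  have "((\<lambda>t. c1 + c2 * t + c3 * t\<^sup>2 + c4 * t ^ 3)
      \<longlongrightarrow> c1 + c2 * 0 + c3 * 0\<^sup>2 + c4 * 0 ^ 3) (at_right 0)"
    by (intro tendsto_intros)
  then have "eventually (\<lambda>t. c1 + c2 * t + c3 * t\<^sup>2 + c4 * t ^ 3 < 0) (at_right 0)"
    using \<open>c1 < 0\<close> by (simp add: order_tendstoD)
  then show ?thesis
    using eventually_at_right_less[of 0] by eventually_elim (simp add: factor mult_pos_neg)
next
  assume "c1 = 0 \<and> c2 < 0"
  then have factor: "c1 * t + c2 * t\<^sup>2 + c3 * t ^ 3 + c4 * t ^ 4
      = t\<^sup>2 * (c2 + c3 * t + c4 * t\<^sup>2)" for t
    by (simp add: power2_eq_square power3_eq_cube power4_eq_xxxx algebra_simps)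
  have "((\<lambda>t. c2 + c3 * t + c4 * t\<^sup>2) \<longlongrightarrow> c2 + c3 * 0 + c4 * 0\<^sup>2) (at_right 0)"
    by (intro tendsto_intros)
  then have "eventually (\<lambda>t. c2 + c3 * t + c4 * t\<^sup>2 < 0) (at_right 0)"
    using \<open>c1 = 0 \<and> c2 < 0\<close> by (simp add: order_tendstoD)
  then show ?thesis
    using eventually_at_right_less[of 0] by eventually_elim (simp add: factor mult_pos_neg)
qed

lemma triangle_closing:
  fixes x y w :: real
  assumes "0 \<le> x" "0 \<le> y" "\<bar>x - y\<bar> \<le> w" "w \<le> x + y"
  obtains \<theta> t where "cmod t = 1" "of_real x + of_real y * cis \<theta> + of_real w * t = 0"
proof -
  define g where "g \<theta> = cmod (of_real x + of_real y * cis \<theta>)" for \<theta>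
  have "g pi \<le> w" "w \<le> g 0"
    using assms unfolding g_def by (simp_all flip: of_real_add of_real_diff)
  moreover have "continuous_on {0..pi} g"
    unfolding g_def by (intro continuous_intros)
  ultimately obtain \<theta> where "cmod (of_real x + of_real y * cis \<theta>) = w"
    using IVT2'[of g pi w 0] unfolding g_def by (auto simp: pi_ge_zero)
  moreover define c where "c = of_real x + of_real y * cis \<theta>"
  ultimately have "cmod c = w"
    by simp
  define t where "t = (if w = 0 then 1 else - c / of_real w)"
  have "cmod t = 1" "c + of_real w * t = 0"
    using \<open>cmod c = w\<close> by (auto simp: t_def norm_divide norm_minus_cancel)
  then show ?thesis
    using that unfolding c_def by blast
qed

lemma exists_subset_crossing_half:
  fixes r :: "'n::finite \<Rightarrow> real"
  assumes "\<And>k. 0 \<le> r k" "0 < sum r UNIV"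
  obtains A j where "j \<notin> A" "2 * sum r A \<le> sum r UNIV" "sum r UNIV < 2 * (r j + sum r A)"
proof -
  define F where "F = {B. 2 * sum r B \<le> sum r UNIV}"
  have "finite F" "F \<noteq> {}"
    using assms(2) unfolding F_def by (simp_all add: ex_in_conv[symmetric] exI[of _ "{}"])
  then obtain A where "A \<in> F" and maximal: "\<forall>B\<in>F. A \<subseteq> B \<longrightarrow> A = B"
    using finite_has_maximal by blast
  then have "2 * sum r A \<le> sum r UNIV"
    unfolding F_def by simp
  have "A \<noteq> UNIV"
    using \<open>2 * sum r A \<le> sum r UNIV\<close> assms(2) by auto
  then obtain j where "j \<notin> A"
    by blast
  then have "insert j A \<notin> F"
    using maximal by blast
  then have "sum r UNIV < 2 * sum r (insert j A)"
    unfolding F_def by simp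
  then show ?thesis
    using that \<open>j \<notin> A\<close> \<open>2 * sum r A \<le> sum r UNIV\<close> by simp
qed

lemma exists_unimodular_sum_zero:
  fixes r :: "'n::finite \<Rightarrow> real"
  assumes nonneg: "\<And>k. 0 \<le> r k" and half: "\<And>k. 2 * r k \<le> sum r UNIV"
  obtains u where "\<And>k. cmod (u k) = 1" "(\<Sum>k\<in>UNIV. of_real (r k) * u k) = 0"
proof (cases "sum r UNIV = 0")
  case True
  then have "r k = 0" for k
    using nonneg sum_nonneg_eq_0_iff[of UNIV r] by simp
  then show ?thesis
    using that[of "\<lambda>_. 1"] by simp
next
  case False
  then have "sum r UNIV > 0"
    using nonneg by (simp add: order_le_neq_trans sum_nonneg)
  obtain A j where "j \<notin> A" "2 * sum r A \<le> sum r UNIV" "sum r UNIV < 2 * (r j + sum r A)"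
    by (rule exists_subset_crossing_half[OF nonneg \<open>sum r UNIV > 0\<close>])
  define C where "C = UNIV - insert j A"
  have split: "sum r UNIV = sum r C + (r j + sum r A)"
    unfolding C_def using sum.subset_diff[of "insert j A" UNIV r] \<open>j \<notin> A\<close> by simp
  have triangle: "\<bar>sum r A - r j\<bar> \<le> sum r C" "sum r C \<le> sum r A + r j"
    using split half[of j] \<open>2 * sum r A \<le> sum r UNIV\<close> \<open>sum r UNIV < 2 * (r j + sum r A)\<close>
    by (simp_all add: abs_le_iff)
  then obtain \<theta> t where "cmod t = 1"
      and closing: "of_real (sum r A) + of_real (r j) * cis \<theta> + of_real (sum r C) * t = 0"
    using triangle_closing[OF sum_nonneg[OF nonneg] nonneg triangle] by blast
  define u where "u k = (if k \<in> A then 1 else if k = j then cis \<theta> else t)" for k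
  have "(\<Sum>k\<in>UNIV. of_real (r k) * u k)
      = (\<Sum>k\<in>C. of_real (r k) * u k) + (of_real (r j) * u j + (\<Sum>k\<in>A. of_real (r k) * u k))"
    unfolding C_def using sum.subset_diff[of "insert j A" UNIV] \<open>j \<notin> A\<close> by simp
  also have "(\<Sum>k\<in>C. of_real (r k) * u k) = of_real (sum r C) * t"
    unfolding C_def u_def by (simp add: of_real_sum sum_distrib_right)
  also have "(\<Sum>k\<in>A. of_real (r k) * u k) = of_real (sum r A)"
    unfolding u_def by (simp add: of_real_sum)
  also have "u j = cis \<theta>"
    using \<open>j \<notin> A\<close> by (simp add: u_def)
  finally have "(\<Sum>k\<in>UNIV. of_real (r k) * u k) = 0"
    using closing by (simp add: ac_simps)
  then show ?thesis
    using that[of u] \<open>cmod t = 1\<close> unfolding u_def by simp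
qed

lemma cnj_mult_cis_Arg: "cnj x * cis (Arg x) = of_real (cmod x)"
proof (cases "x = 0")
  case False
  then have "cnj x * cis (Arg x) = x * cnj x / of_real (cmod x)"
    by (simp add: cis_Arg sgn_eq mult.commute)
  also have "\<dots> = of_real (cmod x)"
    using False by (simp add: power2_eq_square flip: complex_norm_square)
  finally show ?thesis .
qed simp

lemma csphere_iff_sum: "z \<in> csphere \<longleftrightarrow> (\<Sum>l\<in>UNIV. (cmod (z$l))\<^sup>2) = 1"
  unfolding csphere_def mem_Collect_eq power2_norm_vec[symmetric]
  by (metis norm_ge_zero power2_eq_1_iff abs_of_nonneg abs_power2 one_power2 real_sqrt_abs
      real_sqrt_one)

lemma inner_c_add_right: "inner_c a (x + y) = inner_c a x + inner_c a y"
  unfolding inner_c_def by (simp add: distrib_left sum.distrib)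

lemma inner_c_scaleR_right: "inner_c a (c *\<^sub>R x) = of_real c * inner_c a x"
  unfolding inner_c_def
  by (simp only: vector_scaleR_component)
     (simp add: scaleR_conv_of_real sum_distrib_left algebra_simps)

lemma norm4_4_eq_sum_power2: "norm4_4 z = (\<Sum>l\<in>UNIV. ((cmod (z$l))\<^sup>2)\<^sup>2)"
  unfolding norm4_4_def by (simp flip: power_mult)

lemma norm4_4_ge_on_csphere:
  assumes "z \<in> csphere"
  shows "1 / CARD('n) \<le> norm4_4 (z::complex^'n)"
proof -
  have "(\<Sum>l\<in>UNIV. (cmod (z$l))\<^sup>2)\<^sup>2 \<le> norm4_4 z * CARD('n)"
    unfolding norm4_4_eq_sum_power2 by (rule sum_squared_le_sum_of_squares)
  then show ?thesis
    using assms by (simp add: csphere_iff_sum divide_le_eq)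
qed

lemma norm4_4_scaleR: "norm4_4 (c *\<^sub>R x) = c ^ 4 * norm4_4 x"
  unfolding norm4_4_def by (simp add: power_mult_distrib sum_distrib_left)

lemma norm4_4_add_scaleR:
  "norm4_4 (z + t *\<^sub>R v) = norm4_4 z
     + 4 * t * (\<Sum>l\<in>UNIV. (cmod (z$l))\<^sup>2 * inner (z$l) (v$l))
     + 2 * t\<^sup>2 * (\<Sum>l\<in>UNIV. 2 * (inner (z$l) (v$l))\<^sup>2 + (cmod (z$l))\<^sup>2 * (cmod (v$l))\<^sup>2)
     + 4 * t ^ 3 * (\<Sum>l\<in>UNIV. inner (z$l) (v$l) * (cmod (v$l))\<^sup>2)
     + t ^ 4 * (\<Sum>l\<in>UNIV. ((cmod (v$l))\<^sup>2)\<^sup>2)"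
proof -
  have expand: "((cmod (z$l + t *\<^sub>R v$l))\<^sup>2)\<^sup>2 = ((cmod (z$l))\<^sup>2)\<^sup>2
     + 4 * t * ((cmod (z$l))\<^sup>2 * inner (z$l) (v$l))
     + 2 * t\<^sup>2 * (2 * (inner (z$l) (v$l))\<^sup>2 + (cmod (z$l))\<^sup>2 * (cmod (v$l))\<^sup>2)
     + 4 * t ^ 3 * (inner (z$l) (v$l) * (cmod (v$l))\<^sup>2)
     + t ^ 4 * ((cmod (v$l))\<^sup>2)\<^sup>2" for l
    unfolding power2_norm_add_scaleR
    by (simp add: power2_eq_square power3_eq_cube power4_eq_xxxx algebra_simps)
  show ?thesis
    unfolding norm4_4_eq_sum_power2 vector_add_component vector_scaleR_component expand
    by (simp only: sum.distrib flip: sum_distrib_left)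
qed

lemma fobj_scaleR:
  "fobj a \<beta> (c *\<^sub>R x) = c\<^sup>2 * (cmod (inner_c a x))\<^sup>2 / 2 + c ^ 4 * (\<beta> / 2) * norm4_4 x"
  unfolding fobj_def inner_c_scaleR_right norm4_4_scaleR
  by (simp add: norm_mult power_mult_distrib)

lemma csphere_equal_moduli:
  fixes z :: "complex^'n"
  assumes "z \<in> csphere" "\<And>k. z$k \<noteq> 0 \<Longrightarrow> (cmod (z$k))\<^sup>2 = c"
  shows "norm4_4 z = c" and "c * card {k. z$k \<noteq> 0} = 1"
proof -
  have moduli: "(cmod (z$k))\<^sup>2 = (if z$k \<noteq> 0 then c else 0)" for k
    using assms(2) by simp
  have "1 = (\<Sum>k\<in>UNIV. if z$k \<noteq> 0 then c else 0)"
    using assms(1) unfolding csphere_iff_sum moduli by simp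
  also have "\<dots> = c * card {k. z$k \<noteq> 0}"
    by (simp flip: sum.inter_filter)
  finally show "c * card {k. z$k \<noteq> 0} = 1" ..
  have "norm4_4 z = (\<Sum>k\<in>UNIV. c * (cmod (z$k))\<^sup>2)"
    unfolding norm4_4_eq_sum_power2 moduli by (rule sum.cong) (simp_all add: power2_eq_square)
  then show "norm4_4 z = c"
    using assms(1) by (simp add: csphere_iff_sum flip: sum_distrib_left)
qed

lemma fobj_csphere_equal_moduli:
  fixes z :: "complex^'n"
  assumes "z \<in> csphere" "inner_c a z = 0" "\<And>k. z$k \<noteq> 0 \<Longrightarrow> (cmod (z$k))\<^sup>2 = c"
  shows "fobj a \<beta> z = \<beta> * c / 2"
  using csphere_equal_moduli(1)[OF assms(1,3)] assms(2) by (simp add: fobj_def)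

lemma global_min_on_imp_local_min_on: "global_min_on f S z \<Longrightarrow> local_min_on f S z"
  unfolding global_min_on_def local_min_on_def by (auto intro: exI[of _ 1])

lemma global_min_on_if_lower_bound:
  assumes "z \<in> S" "f z \<le> m" "\<And>w. w \<in> S \<Longrightarrow> m \<le> f w"
  shows "global_min_on f S z"
  using assms unfolding global_min_on_def by (blast intro: order_trans)

lemma not_local_min_on_if_descent_path:
  assumes "(\<gamma> \<longlongrightarrow> z) (at_right (0::real))"
    and "eventually (\<lambda>t. \<gamma> t \<in> S \<and> f (\<gamma> t) < f z) (at_right 0)"
  shows "\<not> local_min_on f S z"
proof
  assume "local_min_on f S z"
  then obtain e where "e > 0" and min: "\<forall>w\<in>S. dist w z < e \<longrightarrow> f z \<le> f w"
    unfolding local_min_on_def by blast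
  with assms have "eventually (\<lambda>t. dist (\<gamma> t) z < e \<and> \<gamma> t \<in> S \<and> f (\<gamma> t) < f z) (at_right 0)"
    by (auto intro: eventually_conj tendstoD)
  then obtain t where "dist (\<gamma> t) z < e" "\<gamma> t \<in> S" "f (\<gamma> t) < f z"
    using eventually_happens' trivial_limit_at_right_real by blast
  with min show False by fastforce
qed

lemma fobj_sgn_add_scaleR:
  fixes z v :: "complex^'n"
  assumes "norm z = 1" "inner z v = 0" "inner_c a z = 0"
  shows "fobj a \<beta> (sgn (z + t *\<^sub>R v)) * (1 + t\<^sup>2 * (norm v)\<^sup>2)\<^sup>2
       = t\<^sup>2 * (cmod (inner_c a v))\<^sup>2 * (1 + t\<^sup>2 * (norm v)\<^sup>2) / 2 + (\<beta> / 2) * norm4_4 (z + t *\<^sub>R v)"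
proof -
  define D where "D = 1 + t\<^sup>2 * (norm v)\<^sup>2"
  have "D > 0"
    unfolding D_def by (simp add: add_pos_nonneg)
  have inv2: "(1 / sqrt D)\<^sup>2 = 1 / D"
    using \<open>D > 0\<close> by (simp add: power_divide)
  have inv4: "(1 / sqrt D) ^ 4 = (1 / D)\<^sup>2"
    unfolding inv2[symmetric] by (simp flip: power_mult)
  have "fobj a \<beta> (sgn (z + t *\<^sub>R v))
      = t\<^sup>2 * (cmod (inner_c a v))\<^sup>2 / (2 * D) + (\<beta> / 2) * norm4_4 (z + t *\<^sub>R v) / D\<^sup>2"
    using assms
    unfolding sgn_add_scaleR_orthogonal[OF assms(1,2)] fobj_scaleR D_def[symmetric] inv2 inv4
    by (simp add: inner_c_add_right inner_c_scaleR_right norm_mult power_mult_distrib power_divide)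
  then show ?thesis
    using \<open>D > 0\<close> unfolding D_def[symmetric] by (simp add: field_simps power2_eq_square)
qed

lemma fobj_sgn_add_scaleR_expansion:
  fixes z v :: "complex^'n"
  assumes "norm z = 1" "inner z v = 0" "inner_c a z = 0"
  obtains c3 c4 where
    "\<And>t. (fobj a \<beta> (sgn (z + t *\<^sub>R v)) - fobj a \<beta> z) * (1 + t\<^sup>2 * (norm v)\<^sup>2)\<^sup>2
       = 2 * \<beta> * (\<Sum>l\<in>UNIV. (cmod (z$l))\<^sup>2 * inner (z$l) (v$l)) * t
       + ((cmod (inner_c a v))\<^sup>2 / 2
          + \<beta> * (\<Sum>l\<in>UNIV. 2 * (inner (z$l) (v$l))\<^sup>2 + (cmod (z$l))\<^sup>2 * (cmod (v$l))\<^sup>2)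
          - \<beta> * norm4_4 z * (norm v)\<^sup>2) * t\<^sup>2
       + c3 * t ^ 3 + c4 * t ^ 4"
proof -
  define S1 where "S1 = (\<Sum>l\<in>UNIV. (cmod (z$l))\<^sup>2 * inner (z$l) (v$l))"
  define S2 where "S2 = (\<Sum>l\<in>UNIV. 2 * (inner (z$l) (v$l))\<^sup>2 + (cmod (z$l))\<^sup>2 * (cmod (v$l))\<^sup>2)"
  define S3 where "S3 = (\<Sum>l\<in>UNIV. inner (z$l) (v$l) * (cmod (v$l))\<^sup>2)"
  define S4 where "S4 = (\<Sum>l\<in>UNIV. ((cmod (v$l))\<^sup>2)\<^sup>2)"
  define A where "A = (cmod (inner_c a v))\<^sup>2"
  define V where "V = (norm v)\<^sup>2"
  define Q where "Q = norm4_4 z"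
  have path: "fobj a \<beta> (sgn (z + t *\<^sub>R v)) * (1 + t\<^sup>2 * V)\<^sup>2
      = t\<^sup>2 * A * (1 + t\<^sup>2 * V) / 2 + (\<beta> / 2) * norm4_4 (z + t *\<^sub>R v)" for t
    using fobj_sgn_add_scaleR[OF assms] unfolding A_def V_def .
  have start: "fobj a \<beta> z = (\<beta> / 2) * Q"
    using assms(3) by (simp add: fobj_def Q_def)
  have "(fobj a \<beta> (sgn (z + t *\<^sub>R v)) - fobj a \<beta> z) * (1 + t\<^sup>2 * V)\<^sup>2
     = 2 * \<beta> * S1 * t + (A / 2 + \<beta> * S2 - \<beta> * Q * V) * t\<^sup>2
       + (2 * \<beta> * S3) * t ^ 3 + (A * V / 2 + (\<beta> / 2) * S4 - (\<beta> / 2) * Q * V\<^sup>2) * t ^ 4" for t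
    unfolding left_diff_distrib path start norm4_4_add_scaleR
      S1_def[symmetric] S2_def[symmetric] S3_def[symmetric] S4_def[symmetric] Q_def[symmetric]
    by (simp add: power2_eq_square power3_eq_cube power4_eq_xxxx algebra_simps)
  then show ?thesis
    using that unfolding S1_def S2_def A_def V_def Q_def by blast
qed

lemma not_local_min_on_csphere_if_quartic_descent:
  fixes f :: "complex^'n \<Rightarrow> real"
  assumes "norm z = 1" "inner z v = 0"
    and expansion: "\<And>t. (f (sgn (z + t *\<^sub>R v)) - f z) * (1 + t\<^sup>2 * (norm v)\<^sup>2)\<^sup>2
                        = c1 * t + c2 * t\<^sup>2 + c3 * t ^ 3 + c4 * t ^ 4"
    and "c1 < 0 \<or> c1 = 0 \<and> c2 < 0"
  shows "\<not> local_min_on f csphere z"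
proof (rule not_local_min_on_if_descent_path)
  have "z \<noteq> 0"
    using assms(1) by auto
  then have "((\<lambda>t. sgn (z + t *\<^sub>R v)) \<longlongrightarrow> sgn (z + 0 *\<^sub>R v)) (at_right 0)"
    by (intro tendsto_intros) auto
  then show "((\<lambda>t. sgn (z + t *\<^sub>R v)) \<longlongrightarrow> z) (at_right 0)"
    using assms(1) by (simp add: sgn_div_norm)
  have on_sphere: "sgn (z + t *\<^sub>R v) \<in> csphere" for t
  proof -
    have "(norm (z + t *\<^sub>R v))\<^sup>2 = 1 + t\<^sup>2 * (norm v)\<^sup>2"
      using assms(1,2) by (simp add: power2_norm_add_scaleR)
    also have "\<dots> > 0"
      by (simp add: add_pos_nonneg)
    finally have "z + t *\<^sub>R v \<noteq> 0"
      by auto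
    then show ?thesis
      by (simp add: csphere_def norm_sgn)
  qed
  show "eventually (\<lambda>t. sgn (z + t *\<^sub>R v) \<in> csphere \<and> f (sgn (z + t *\<^sub>R v)) < f z) (at_right 0)"
    using eventually_at_right_0_quartic_neg[OF assms(4), of c3 c4]
  proof eventually_elim
    case (elim t)
    have "0 < 1 + t\<^sup>2 * (norm v)\<^sup>2"
      by (simp add: add_pos_nonneg)
    then have "0 < (1 + t\<^sup>2 * (norm v)\<^sup>2)\<^sup>2"
      by simp
    with elim have "f (sgn (z + t *\<^sub>R v)) - f z < 0"
      unfolding expansion[symmetric] by (simp add: mult_less_0_iff)
    then show ?case
      using on_sphere by simp
  qed
qed

lemma local_min_on_csphere_first_order:
  assumes "local_min_on (fobj a \<beta>) csphere z" "inner_c a z = 0" "inner z v = 0" "\<beta> > 0"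
  shows "0 \<le> (\<Sum>l\<in>UNIV. (cmod (z$l))\<^sup>2 * inner (z$l) (v$l))"
proof (rule ccontr)
  assume negative: "\<not> ?thesis"
  have "norm z = 1"
    using assms(1) by (simp add: local_min_on_def csphere_def)
  have "\<not> local_min_on (fobj a \<beta>) csphere z"
    apply (rule fobj_sgn_add_scaleR_expansion[OF \<open>norm z = 1\<close> assms(3,2)])
    apply (erule not_local_min_on_csphere_if_quartic_descent[OF \<open>norm z = 1\<close> assms(3)])
    using negative assms(4) by (simp add: mult_pos_neg)
  with assms(1) show False
    by blast
qed

lemma local_min_on_csphere_second_order:
  assumes "local_min_on (fobj a \<beta>) csphere z" "inner_c a z = 0" "\<And>l. inner (z$l) (v$l) = 0"
  shows "\<beta> * norm4_4 z * (norm v)\<^sup>2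
           \<le> (cmod (inner_c a v))\<^sup>2 / 2 + \<beta> * (\<Sum>l\<in>UNIV. (cmod (z$l))\<^sup>2 * (cmod (v$l))\<^sup>2)"
proof (rule ccontr)
  assume negative: "\<not> ?thesis"
  have "norm z = 1"
    using assms(1) by (simp add: local_min_on_def csphere_def)
  have "inner z v = 0"
    by (simp add: inner_vec_def assms(3))
  have "\<not> local_min_on (fobj a \<beta>) csphere z"
    apply (rule fobj_sgn_add_scaleR_expansion[OF \<open>norm z = 1\<close> \<open>inner z v = 0\<close> assms(2)])
    apply (erule not_local_min_on_csphere_if_quartic_descent[OF \<open>norm z = 1\<close> \<open>inner z v = 0\<close>])
    using negative by (simp add: assms(3))
  with assms(1) show False
    by blast
qed

lemma local_min_on_csphere_equal_moduli:
  fixes z :: "complex^'n"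
  assumes lm: "local_min_on (fobj a \<beta>) csphere z" and "inner_c a z = 0" "\<beta> > 0"
    and "z$i \<noteq> 0" "z$j \<noteq> 0"
  shows "cmod (z$i) = cmod (z$j)"
proof -
  have le: "cmod (z$i) \<le> cmod (z$j)" if "z$i \<noteq> 0" "z$j \<noteq> 0" "i \<noteq> j" for i j
  proof -
    define p where "p k = (cmod (z$k))\<^sup>2" for k
    have "p i > 0" "p j > 0"
      using that by (simp_all add: p_def)
    define v where "v = (\<chi> l. if l = i then (- p j) *\<^sub>R z$i else if l = j then p i *\<^sub>R z$j else 0)"
    have inner_v: "inner (z$l) (v$l)
        = (if l = i then - p j * p i else if l = j then p i * p j else 0)" for l
      using \<open>i \<noteq> j\<close> by (simp add: v_def p_def dot_square_norm)
    have "inner z v = 0"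
      unfolding inner_vec_def inner_v using \<open>i \<noteq> j\<close> by (subst sum_UNIV_two_support) auto
    then have "0 \<le> (\<Sum>l\<in>UNIV. p l * inner (z$l) (v$l))"
      using local_min_on_csphere_first_order[OF lm assms(2)] assms(3) unfolding p_def by blast
    also have "\<dots> = p i * p j * (p j - p i)"
      unfolding inner_v using \<open>i \<noteq> j\<close> by (subst sum_UNIV_two_support) (auto simp: algebra_simps)
    moreover have "p i * p j > 0"
      using \<open>p i > 0\<close> \<open>p j > 0\<close> by simp
    ultimately have "p i \<le> p j"
      by (simp add: zero_le_mult_iff)
    then show ?thesis
      by (simp add: p_def)
  qed
  show ?thesis
    using le[of i j] le[of j i] assms(4,5) by (cases "i = j") auto
qed

lemma local_min_on_csphere_zero_component:
  fixes z :: "complex^'n"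
  assumes lm: "local_min_on (fobj a \<beta>) csphere z" and "inner_c a z = 0" "z$j = 0"
  shows "\<beta> * norm4_4 z \<le> (cmod (a$j))\<^sup>2 / 2"
proof -
  define v :: "complex^'n" where "v = (\<chi> l. if l = j then 1 else 0)"
  have "inner (z$l) (v$l) = 0" for l
    using assms(3) by (simp add: v_def)
  from local_min_on_csphere_second_order[OF lm assms(2) this]
  show ?thesis
    using assms(3) unfolding power2_norm_vec inner_c_def
    by (simp add: v_def sum_UNIV_single_support[of j])
qed

lemma local_min_on_csphere_two_zero_components:
  fixes z :: "complex^'n"
  assumes lm: "local_min_on (fobj a \<beta>) csphere z" and "inner_c a z = 0" "\<beta> > 0"
    and "z$j = 0" "z$j' = 0" "j \<noteq> j'"
  shows "a$j = 0"
proof -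
  define v where "v = (\<chi> l. if l = j then cnj (a$j') else if l = j' then - cnj (a$j) else 0)"
  have "inner (z$l) (v$l) = 0" for l
    using assms(4,5) by (simp add: v_def)
  from local_min_on_csphere_second_order[OF lm assms(2) this]
  have "\<beta> * norm4_4 z * ((cmod (a$j'))\<^sup>2 + (cmod (a$j))\<^sup>2) \<le> 0"
    using assms(4-6) unfolding power2_norm_vec inner_c_def
    by (simp add: v_def sum_UNIV_two_support[OF assms(6)])
  moreover have "norm4_4 z > 0"
    using norm4_4_ge_on_csphere[of z] lm unfolding local_min_on_def
    by (meson less_le_trans of_nat_0_less_iff zero_less_card_finite zero_less_divide_1_iff)
  ultimately have "(cmod (a$j'))\<^sup>2 + (cmod (a$j))\<^sup>2 \<le> 0"
    using assms(3) by (simp add: mult_le_0_iff)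
  then have "(cmod (a$j))\<^sup>2 \<le> 0"
    using zero_le_power2[of "cmod (a$j')"] by linarith
  then show ?thesis
    by simp
qed

lemma local_min_on_csphere_coeff_zero_on_support:
  fixes z :: "complex^'n"
  assumes lm: "local_min_on (fobj a \<beta>) csphere z" and "inner_c a z = 0" "\<beta> > 0"
    and "z$j = 0" "a$j \<noteq> 0" "z$k \<noteq> 0" "(cmod (z$k))\<^sup>2 \<le> norm4_4 z"
  shows "a$k = 0"
proof -
  have "j \<noteq> k"
    using assms(4,6) by auto
  \<comment> \<open>rotate the phase of z_k; coordinate j compensates so that a*v = 0\<close>
  define v where "v = (\<chi> l. if l = k then \<i> * z$k
                          else if l = j then - (cnj (a$k) * \<i> * z$k) / cnj (a$j) else 0)"
  have "inner (z$l) (v$l) = 0" for l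
    using assms(4) by (simp add: v_def inner_complex_def algebra_simps)
  from local_min_on_csphere_second_order[OF lm assms(2) this]
  have "\<beta> * norm4_4 z * ((cmod (v$j))\<^sup>2 + (cmod (z$k))\<^sup>2) \<le> \<beta> * ((cmod (z$k))\<^sup>2)\<^sup>2"
    using assms(4,5) \<open>j \<noteq> k\<close> unfolding power2_norm_vec inner_c_def
    by (simp add: sum_UNIV_two_support[OF \<open>j \<noteq> k\<close>] v_def norm_mult field_simps)
  moreover have "\<beta> * (cmod (z$k))\<^sup>2 * ((cmod (v$j))\<^sup>2 + (cmod (z$k))\<^sup>2)
      \<le> \<beta> * norm4_4 z * ((cmod (v$j))\<^sup>2 + (cmod (z$k))\<^sup>2)"
    using assms(3,7) by (intro mult_right_mono mult_left_mono) auto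
  ultimately have "\<beta> * (cmod (z$k))\<^sup>2 * (cmod (v$j))\<^sup>2 \<le> 0"
    by (simp add: algebra_simps power2_eq_square)
  then have "v$j = 0"
    using assms(3,6) by (simp add: mult_le_0_iff)
  then show ?thesis
    using assms(5,6) \<open>j \<noteq> k\<close> by (simp add: v_def)
qed

lemma local_min_on_csphere_structure:
  fixes z :: "complex^'n"
  assumes "CARD('n) \<ge> 2" and lm: "local_min_on (fobj a \<beta>) csphere z" and "inner_c a z = 0" "\<beta> > 0"
  shows "(\<forall>k. (cmod (z$k))\<^sup>2 = 1 / CARD('n))
       \<or> (\<exists>j. z$j = 0 \<and> a$j \<noteq> 0 \<and> 2 * \<beta> / (real CARD('n) - 1) \<le> (cmod (a$j))\<^sup>2
              \<and> (\<forall>k. k \<noteq> j \<longrightarrow> a$k = 0 \<and> (cmod (z$k))\<^sup>2 = 1 / (real CARD('n) - 1)))"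
proof -
  have "z \<in> csphere"
    using lm by (simp add: local_min_on_def)
  then obtain k0 where "z$k0 \<noteq> 0"
    by (metis (no_types, lifting) csphere_iff_sum norm_zero sum.neutral zero_neq_one zero_power2)
  define c where "c = (cmod (z$k0))\<^sup>2"
  have moduli: "(cmod (z$k))\<^sup>2 = c" if "z$k \<noteq> 0" for k
    using local_min_on_csphere_equal_moduli[OF lm assms(3,4) that \<open>z$k0 \<noteq> 0\<close>] by (simp add: c_def)
  note csphere_equal_moduli[OF \<open>z \<in> csphere\<close> moduli]
  then have "norm4_4 z = c" and card_support: "c * card {k. z$k \<noteq> 0} = 1"
    by blast+
  show ?thesis
  proof (cases "\<forall>k. z$k \<noteq> 0")
    case True
    then show ?thesis
      using card_support moduli by (simp add: eq_divide_eq mult.commute)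
  next
    case False
    then obtain j where "z$j = 0"
      by blast
    have "c > 0"
      using \<open>z$k0 \<noteq> 0\<close> by (simp add: c_def)
    have "\<beta> * c \<le> (cmod (a$j))\<^sup>2 / 2"
      using local_min_on_csphere_zero_component[OF lm assms(3) \<open>z$j = 0\<close>] \<open>norm4_4 z = c\<close> by simp
    then have "a$j \<noteq> 0"
      using mult_pos_pos[OF assms(4) \<open>c > 0\<close>] by auto
    have nonzero: "z$k \<noteq> 0" if "k \<noteq> j" for k
      using local_min_on_csphere_two_zero_components[OF lm assms(3,4) \<open>z$j = 0\<close> _ that[symmetric]]
        \<open>a$j \<noteq> 0\<close> by blast
    then have "{k. z$k \<noteq> 0} = UNIV - {j}"
      using \<open>z$j = 0\<close> by blast
    then have "c = 1 / (real CARD('n) - 1)"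
      using card_support assms(1)
      by (simp add: card_Diff_singleton of_nat_diff eq_divide_eq mult.commute)
    moreover have "a$k = 0" if "k \<noteq> j" for k
      using local_min_on_csphere_coeff_zero_on_support[OF lm assms(3,4) \<open>z$j = 0\<close> \<open>a$j \<noteq> 0\<close> nonzero[OF that]]
        moduli[OF nonzero[OF that]] \<open>norm4_4 z = c\<close> by simp
    ultimately show ?thesis
      using \<open>z$j = 0\<close> \<open>a$j \<noteq> 0\<close> \<open>\<beta> * c \<le> (cmod (a$j))\<^sup>2 / 2\<close> moduli nonzero
      by (intro disjI2 exI[of _ j]) (auto simp: field_simps)
  qed
qed

lemma norminf_le_half_norm1_iff:
  fixes a :: "complex^'n"
  assumes "c > 0"
  shows "norminf a \<le> norm1 a / 2 \<longleftrightarrow> (\<exists>z. inner_c a z = 0 \<and> (\<forall>k. cmod (z$k) = c))"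
proof
  \<comment> \<open>the moduli |a_k| close up into a polygon whose sides are the terms cnj a_k * z_k\<close>
  assume balanced_norms: "norminf a \<le> norm1 a / 2"
  have "2 * cmod (a$k) \<le> (\<Sum>l\<in>UNIV. cmod (a$l))" for k
  proof -
    have "cmod (a$k) \<le> norminf a"
      unfolding norminf_def by (rule Max_ge) auto
    then show ?thesis
      using balanced_norms unfolding norm1_def by linarith
  qed
  then obtain u where "\<And>k. cmod (u k) = 1" and balanced: "(\<Sum>k\<in>UNIV. of_real (cmod (a$k)) * u k) = 0"
    using exists_unimodular_sum_zero[of "\<lambda>k. cmod (a$k)"] by auto
  define z where "z = (\<chi> k. of_real c * cis (Arg (a$k)) * u k)"
  have "inner_c a z = of_real c * (\<Sum>k\<in>UNIV. (cnj (a$k) * cis (Arg (a$k))) * u k)"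
    unfolding inner_c_def z_def by (simp add: sum_distrib_left algebra_simps)
  also have "\<dots> = 0"
    unfolding cnj_mult_cis_Arg balanced by simp
  finally show "\<exists>z. inner_c a z = 0 \<and> (\<forall>k. cmod (z$k) = c)"
    using \<open>c > 0\<close> \<open>\<And>k. cmod (u k) = 1\<close> by (auto simp: z_def norm_mult)
next
  assume "\<exists>z. inner_c a z = 0 \<and> (\<forall>k. cmod (z$k) = c)"
  then obtain z where "inner_c a z = 0" and moduli: "\<And>k. cmod (z$k) = c"
    by blast
  have "cmod (a$k) \<le> norm1 a / 2" for k
  proof -
    have "cnj (a$k) * z$k = - (\<Sum>l\<in>UNIV - {k}. cnj (a$l) * z$l)"
      using \<open>inner_c a z = 0\<close> sum.remove[of UNIV k "\<lambda>l. cnj (a$l) * z$l"]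
      unfolding inner_c_def by (simp add: eq_neg_iff_add_eq_0)
    then have "c * cmod (a$k) \<le> (\<Sum>l\<in>UNIV - {k}. c * cmod (a$l))"
      by (metis (no_types, lifting) complex_mod_cnj moduli mult.commute norm_minus_cancel norm_mult
          norm_sum sum.cong)
    then have "cmod (a$k) \<le> (\<Sum>l\<in>UNIV - {k}. cmod (a$l))"
      using \<open>c > 0\<close> by (simp flip: sum_distrib_left)
    moreover have "norm1 a = cmod (a$k) + (\<Sum>l\<in>UNIV - {k}. cmod (a$l))"
      unfolding norm1_def by (rule sum.remove) auto
    ultimately show ?thesis
      by simp
  qed
  then show "norminf a \<le> norm1 a / 2"
    unfolding norminf_def by (subst Max_le_iff) auto
qed

lemma fobj_ge_on_csphere:
  fixes w :: "complex^'n"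
  assumes "\<beta> \<ge> 0" "w \<in> csphere"
  shows "(cmod (inner_c a w))\<^sup>2 / 2 + \<beta> / (2 * CARD('n)) \<le> fobj a \<beta> w"
  using mult_left_mono[OF norm4_4_ge_on_csphere[OF assms(2)] assms(1)] by (simp add: fobj_def)

lemma fobj_ge_on_csphere_single_support:
  fixes w :: "complex^'n"
  assumes "CARD('n) \<ge> 2" "\<beta> \<ge> 0" "w \<in> csphere"
    and "\<And>k. k \<noteq> j \<Longrightarrow> a$k = 0" "2 * \<beta> / (real CARD('n) - 1) \<le> (cmod (a$j))\<^sup>2"
  shows "\<beta> / (2 * (real CARD('n) - 1)) + (\<beta> / 2) * ((cmod (w$j))\<^sup>2)\<^sup>2 \<le> fobj a \<beta> w"
proof -
  define M where "M = real CARD('n) - 1"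
  define p where "p = (cmod (w$j))\<^sup>2"
  have "M \<ge> 1" "p \<ge> 0"
    using assms(1) by (simp_all add: M_def p_def)
  have "(cmod (inner_c a w))\<^sup>2 = (cmod (a$j))\<^sup>2 * p"
    unfolding inner_c_def p_def
    by (subst sum_UNIV_single_support[of j]) (simp_all add: assms(4) norm_mult power_mult_distrib)
  then have linear_part: "\<beta> * p / M \<le> (cmod (inner_c a w))\<^sup>2 / 2"
    using mult_right_mono[OF assms(5) \<open>p \<ge> 0\<close>] \<open>M \<ge> 1\<close> by (simp add: M_def field_simps)
  have "real (card (UNIV - {j})) = M"
    using assms(1) by (simp add: M_def card_Diff_singleton of_nat_diff)
  then have "(\<Sum>l\<in>UNIV - {j}. (cmod (w$l))\<^sup>2)\<^sup>2 \<le> M * (\<Sum>l\<in>UNIV - {j}. ((cmod (w$l))\<^sup>2)\<^sup>2)"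
    using sum_squared_le_sum_of_squares[of "\<lambda>l. (cmod (w$l))\<^sup>2" "UNIV - {j}"]
    by (simp add: mult.commute)
  moreover have "(\<Sum>l\<in>UNIV - {j}. (cmod (w$l))\<^sup>2) = 1 - p"
    using assms(3) sum.remove[of UNIV j "\<lambda>l. (cmod (w$l))\<^sup>2"] by (simp add: csphere_iff_sum p_def)
  moreover have "norm4_4 w = p\<^sup>2 + (\<Sum>l\<in>UNIV - {j}. ((cmod (w$l))\<^sup>2)\<^sup>2)"
    unfolding norm4_4_eq_sum_power2 p_def by (rule sum.remove) auto
  ultimately have "(1 - p)\<^sup>2 / M \<le> norm4_4 w - p\<^sup>2"
    using \<open>M \<ge> 1\<close> by (simp add: divide_le_eq mult.commute)
  then have "(\<beta> / 2) * (p\<^sup>2 + (1 - p)\<^sup>2 / M) \<le> (\<beta> / 2) * norm4_4 w"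
    using assms(2) by (intro mult_left_mono) auto
  then have "\<beta> * p / M + (\<beta> / 2) * (p\<^sup>2 + (1 - p)\<^sup>2 / M) \<le> fobj a \<beta> w"
    using linear_part unfolding fobj_def by linarith
  moreover have "\<beta> * p / M + (\<beta> / 2) * (p\<^sup>2 + (1 - p)\<^sup>2 / M)
      = \<beta> / (2 * M) + (\<beta> / 2) * p\<^sup>2 + \<beta> * p\<^sup>2 / (2 * M)"
    using \<open>M \<ge> 1\<close> by (simp add: field_simps power2_eq_square)
  moreover have "0 \<le> \<beta> * p\<^sup>2 / (2 * M)"
    using assms(2) \<open>M \<ge> 1\<close> by simp
  ultimately show ?thesis
    unfolding M_def p_def by linarith
qed

lemma global_min_on_csphere_uniform_moduli:
  fixes z :: "complex^'n"
  assumes "\<beta> \<ge> 0" "z \<in> csphere" "inner_c a z = 0" "\<And>k. (cmod (z$k))\<^sup>2 = 1 / CARD('n)"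
  shows "global_min_on (fobj a \<beta>) csphere z"
proof (rule global_min_on_if_lower_bound[where f = "fobj a \<beta>"])
  show "z \<in> csphere" "fobj a \<beta> z \<le> \<beta> / (2 * CARD('n))"
    using assms(2) fobj_csphere_equal_moduli[OF assms(2,3), of "1 / CARD('n)"] assms(4) by simp_all
  show "\<beta> / (2 * CARD('n)) \<le> fobj a \<beta> w" if "w \<in> csphere" for w
    using fobj_ge_on_csphere[OF assms(1) that, of a] zero_le_power2[of "cmod (inner_c a w)"] by linarith
qed

lemma global_min_on_csphere_single_gap:
  fixes z :: "complex^'n"
  assumes "CARD('n) \<ge> 2" "\<beta> \<ge> 0" "z \<in> csphere" "inner_c a z = 0"
    and "\<And>k. k \<noteq> j \<Longrightarrow> a$k = 0" "2 * \<beta> / (real CARD('n) - 1) \<le> (cmod (a$j))\<^sup>2"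
    and "\<And>k. z$k \<noteq> 0 \<Longrightarrow> (cmod (z$k))\<^sup>2 = 1 / (real CARD('n) - 1)"
  shows "global_min_on (fobj a \<beta>) csphere z"
proof (rule global_min_on_if_lower_bound[where f = "fobj a \<beta>"])
  show "z \<in> csphere"
    by (fact assms(3))
  show "fobj a \<beta> z \<le> \<beta> / (2 * (real CARD('n) - 1))"
    using fobj_csphere_equal_moduli[OF assms(3,4,7), of \<beta>] by (simp add: algebra_simps)
  show "\<beta> / (2 * (real CARD('n) - 1)) \<le> fobj a \<beta> w" if "w \<in> csphere" for w
  proof -
    have "0 \<le> (\<beta> / 2) * ((cmod (w$j))\<^sup>2)\<^sup>2"
      using assms(2) by simp
    then show ?thesis
      using fobj_ge_on_csphere_single_support[OF assms(1,2) that assms(5,6)] by linarith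
  qed
qed

lemma global_min_on_csphere_balanced:
  fixes a :: "complex^'n"
  assumes "norminf a \<le> norm1 a / 2" "\<beta> > 0"
  shows "(\<exists>z. global_min_on (fobj a \<beta>) csphere z)
       \<and> (\<forall>z. global_min_on (fobj a \<beta>) csphere z \<longrightarrow> inner_c a z = 0)"
proof -
  obtain z0 where "inner_c a z0 = 0" and "\<And>k. cmod (z0$k) = 1 / sqrt CARD('n)"
    using norminf_le_half_norm1_iff[of "1 / sqrt CARD('n)" a] assms(1) by auto
  then have moduli: "(cmod (z0$k))\<^sup>2 = 1 / CARD('n)" for k
    by (simp add: power_divide)
  then have "z0 \<in> csphere"
    by (simp add: csphere_iff_sum)
  have "global_min_on (fobj a \<beta>) csphere z0"
    using global_min_on_csphere_uniform_moduli[OF _ \<open>z0 \<in> csphere\<close> \<open>inner_c a z0 = 0\<close> moduli]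
      assms(2) by simp
  moreover have "inner_c a z = 0" if "global_min_on (fobj a \<beta>) csphere z" for z
  proof -
    have "z \<in> csphere" "fobj a \<beta> z \<le> fobj a \<beta> z0"
      using that \<open>z0 \<in> csphere\<close> unfolding global_min_on_def by auto
    moreover have "fobj a \<beta> z0 = \<beta> / (2 * CARD('n))"
      using fobj_csphere_equal_moduli[OF \<open>z0 \<in> csphere\<close> \<open>inner_c a z0 = 0\<close> moduli] by simp
    ultimately have "(cmod (inner_c a z))\<^sup>2 / 2 + \<beta> / (2 * CARD('n)) \<le> \<beta> / (2 * CARD('n))"
      using fobj_ge_on_csphere[of \<beta> z a] assms(2) by linarith
    then show ?thesis
      by simp
  qed
  ultimately show ?thesis
    by blast
qed

lemma global_min_on_csphere_single_support:
  fixes a :: "complex^'n"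
  assumes "CARD('n) \<ge> 2" "\<beta> > 0"
    and "\<And>k. k \<noteq> j \<Longrightarrow> a$k = 0" "2 * \<beta> / (real CARD('n) - 1) \<le> (cmod (a$j))\<^sup>2"
  shows "(\<exists>z. global_min_on (fobj a \<beta>) csphere z)
       \<and> (\<forall>z. global_min_on (fobj a \<beta>) csphere z \<longrightarrow> inner_c a z = 0)"
proof -
  define z1 :: "complex^'n"
    where "z1 = (\<chi> k. if k = j then 0 else of_real (1 / sqrt (real CARD('n) - 1)))"
  have moduli: "(cmod (z1$k))\<^sup>2 = (if k = j then 0 else 1 / (real CARD('n) - 1))" for k
    using assms(1) by (simp add: z1_def norm_divide power_divide)
  have "(\<Sum>k\<in>UNIV. (cmod (z1$k))\<^sup>2) = (\<Sum>k\<in>UNIV - {j}. 1 / (real CARD('n) - 1))"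
    unfolding moduli by (subst sum.remove[of UNIV j]) auto
  also have "\<dots> = 1"
    using assms(1) by (simp add: card_Diff_singleton of_nat_diff)
  finally have "z1 \<in> csphere"
    by (simp add: csphere_iff_sum)
  have "inner_c a z1 = 0"
    unfolding inner_c_def by (rule sum.neutral) (simp add: z1_def assms(3))
  have gap: "(cmod (z1$k))\<^sup>2 = 1 / (real CARD('n) - 1)" if "z1$k \<noteq> 0" for k
    using moduli[of k] that by (simp add: z1_def split: if_splits)
  have "global_min_on (fobj a \<beta>) csphere z1"
    using global_min_on_csphere_single_gap[OF assms(1) _ \<open>z1 \<in> csphere\<close> \<open>inner_c a z1 = 0\<close>
        assms(3,4) gap] assms(2) by simp
  moreover have "inner_c a z = 0" if "global_min_on (fobj a \<beta>) csphere z" for z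
  proof -
    have "z \<in> csphere" "fobj a \<beta> z \<le> fobj a \<beta> z1"
      using that \<open>z1 \<in> csphere\<close> unfolding global_min_on_def by auto
    moreover have "fobj a \<beta> z1 = \<beta> / (2 * (real CARD('n) - 1))"
      using fobj_csphere_equal_moduli[OF \<open>z1 \<in> csphere\<close> \<open>inner_c a z1 = 0\<close> gap] by simp
    ultimately have "(\<beta> / 2) * ((cmod (z$j))\<^sup>2)\<^sup>2 \<le> 0"
      using fobj_ge_on_csphere_single_support[OF assms(1) _ _ assms(3,4), of z] assms(2) by simp
    then have "z$j = 0"
      using assms(2) by (simp add: mult_le_0_iff)
    then show ?thesis
      unfolding inner_c_def
      by (intro sum.neutral ballI) (metis assms(3) complex_cnj_zero mult_zero_left mult_zero_right)
  qed
  ultimately show ?thesis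
    by blast
qed

lemma local_min_on_csphere_orthogonal_imp_global:
  fixes z :: "complex^'n"
  assumes "CARD('n) \<ge> 2" "\<beta> > 0"
    and lm: "local_min_on (fobj a \<beta>) csphere z" and "inner_c a z = 0"
  shows "global_min_on (fobj a \<beta>) csphere z
       \<and> (norminf a \<le> norm1 a / 2
          \<or> (\<exists>j. a$j \<noteq> 0 \<and> (\<forall>k. k \<noteq> j \<longrightarrow> a$k = 0)
                 \<and> 2 * \<beta> / (real CARD('n) - 1) \<le> (cmod (a$j))\<^sup>2))"
proof -
  have "z \<in> csphere"
    using lm by (simp add: local_min_on_def)
  from local_min_on_csphere_structure[OF assms(1) lm assms(4,2)]
  show ?thesis
  proof (elim disjE exE conjE)
    assume moduli: "\<forall>k. (cmod (z$k))\<^sup>2 = 1 / CARD('n)"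
    then have "global_min_on (fobj a \<beta>) csphere z"
      using global_min_on_csphere_uniform_moduli[OF _ \<open>z \<in> csphere\<close> assms(4)] assms(2) by simp
    moreover have "\<forall>k. cmod (z$k) = sqrt (1 / CARD('n))"
      using moduli by (metis norm_ge_zero real_sqrt_unique)
    then have "norminf a \<le> norm1 a / 2"
      using norminf_le_half_norm1_iff[of "sqrt (1 / CARD('n))" a] assms(4) by auto
    ultimately show ?thesis
      by blast
  next
    fix j
    assume "z$j = 0" "a$j \<noteq> 0" and spike: "2 * \<beta> / (real CARD('n) - 1) \<le> (cmod (a$j))\<^sup>2"
      and others: "\<forall>k. k \<noteq> j \<longrightarrow> a$k = 0 \<and> (cmod (z$k))\<^sup>2 = 1 / (real CARD('n) - 1)"
    have "(cmod (z$k))\<^sup>2 = 1 / (real CARD('n) - 1)" if "z$k \<noteq> 0" for k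
      using others that \<open>z$j = 0\<close> by (cases "k = j") auto
    then have "global_min_on (fobj a \<beta>) csphere z"
      using global_min_on_csphere_single_gap[OF assms(1) _ \<open>z \<in> csphere\<close> assms(4) _ spike]
        others assms(2) by simp
    then show ?thesis
      using \<open>a$j \<noteq> 0\<close> others spike by blast
  qed
qed

theorem theorem9:
  fixes a :: "complex ^ 'n" and \<beta> :: real
  assumes "CARD('n) \<ge> 2" and "\<beta> > 0"
  defines "cond \<equiv> norminf a \<le> norm1 a / 2
              \<or> (card {k. a $ k \<noteq> 0} = 1 \<and> norm a ^ 2 \<ge> 2 * \<beta> / (real CARD('n) - 1))"
  shows "((\<exists>z. local_min_on (fobj a \<beta>) csphere z \<and> inner_c a z = 0) \<longleftrightarrow> cond)
         \<and> (cond \<longrightarrow> (\<forall>z. (local_min_on (fobj a \<beta>) csphere z \<and> inner_c a z = 0)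
                         \<longleftrightarrow> global_min_on (fobj a \<beta>) csphere z))"
proof -
  have cond_iff: "cond \<longleftrightarrow> norminf a \<le> norm1 a / 2
      \<or> (\<exists>j. a$j \<noteq> 0 \<and> (\<forall>k. k \<noteq> j \<longrightarrow> a$k = 0) \<and> 2 * \<beta> / (real CARD('n) - 1) \<le> (cmod (a$j))\<^sup>2)"
    unfolding cond_def card_nonzero_eq_1_iff ..
  have global_orthogonal: "(\<exists>z. global_min_on (fobj a \<beta>) csphere z)
       \<and> (\<forall>z. global_min_on (fobj a \<beta>) csphere z \<longrightarrow> inner_c a z = 0)" if cond
    using that global_min_on_csphere_balanced[OF _ assms(2)]
      global_min_on_csphere_single_support[OF assms(1,2)] unfolding cond_iff by blast
  have local_global: "global_min_on (fobj a \<beta>) csphere z \<and> cond"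
    if "local_min_on (fobj a \<beta>) csphere z" "inner_c a z = 0" for z
    using local_min_on_csphere_orthogonal_imp_global[OF assms(1,2) that] unfolding cond_iff .
  show ?thesis
    using global_orthogonal local_global global_min_on_imp_local_min_on by metis
qed

end
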